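(* Let $\rho\in(-1,1)$, $\rho\ne0$, and let $(Y_n)_{n\ge1}$ be i.i.d. with $\mathbb{E}[|Y_1|^a]<\infty$ for some $a>0$. Set $Z:=\sum_{n=1}^\infty\rho^nY_n$ (an a.s. convergent series). Let $\varphi$ be the characteristic function of $Y_1$ and assume there are $\delta\in(0,|\rho|)$ and $t_0>0$ such that $|\varphi(t)|\le\delta$ for all $|t|\ge t_0$. Then $\mathbb{P}(|Z|\le\varepsilon)\precsim\varepsilon$ as $\varepsilon\downarrow0$.
   Context: $f\precsim g$ as $\varepsilon\downarrow0$ means $\limsup_{\varepsilon\downarrow0}f(\varepsilon)/g(\varepsilon)<\infty$. *)

theory Defs
  imports "HOL-Probability.Probability"
begin

end

theory Submission
  imports Defs
begin

text \<open>
  Proof outline.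
  (1) The moment condition makes the series converge absolutely almost surely.
  (2) By independence the characteristic function \<psi> of Z is \<Prod>n\<ge>1. \<phi>(\<rho>^n s); if
      \<bar>\<rho>\<bar>^N \<bar>s\<bar> \<ge> t0 the first N factors are at most \<delta>, so \<bar>\<psi>(s)\<bar> \<le> \<delta>^N.
  (3) Choosing N \<approx> log(\<bar>s\<bar>/t0) / log(1/\<bar>\<rho>\<bar>) turns this into the power decay
      \<bar>\<psi>(s)\<bar> \<le> K \<bar>s\<bar>^(-p) with p = log \<delta> / log \<bar>\<rho>\<bar> > 1; hence \<psi> is integrable.
  (4) Gaussian smoothing: P(\<bar>X\<bar> \<le> \<epsilon>) \<le> e^(1/2) E exp(-(X/\<epsilon>)^2/2)
      = e^(1/2) \<integral> N(t) \<psi>_X(t/\<epsilon>) dt, which is at most e^(1/2) \<epsilon> \<integral>B for any integrable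
      majorant B of \<bar>\<psi>_X\<bar>.
\<close>

text \<open>A nonnegative sequence whose b-th powers are summable, for some
  0 < b \<le> 1, is itself summable: eventually x n \<le> 1, where
  x n \<le> x n powr b.\<close>
lemma summable_of_summable_powr:
  fixes x :: "nat \<Rightarrow> real" and b :: real
  assumes nonneg: "\<And>n. 0 \<le> x n" and b: "0 < b" "b \<le> 1"
    and su: "summable (\<lambda>n. x n powr b)"
  shows "summable x"
proof -
  have "eventually (\<lambda>n. x n powr b < 1) sequentially"
    using summable_LIMSEQ_zero[OF su] by (rule order_tendstoD) simp
  then have "eventually (\<lambda>n. norm (x n) \<le> x n powr b) sequentially"
  proof (rule eventually_mono)
    fix n assume small: "x n powr b < 1"
    have "x n \<le> 1"
    proof (rule ccontr)
      assume "\<not> x n \<le> 1"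
      then have "1 \<le> x n powr b" using b by (intro ge_one_powr_ge_zero) auto
      with small show False by simp
    qed
    then have "x n powr 1 \<le> x n powr b" using b nonneg by (intro powr_mono') auto
    then show "norm (x n) \<le> x n powr b" using nonneg[of n] by (cases "x n = 0") auto
  qed
  then show ?thesis using su by (rule summable_comparison_test_ev)
qed

text \<open>A finite moment of order a gives finite moments of every order
  0 \<le> b \<le> a, since \<bar>x\<bar> powr b \<le> 1 + \<bar>x\<bar> powr a.\<close>
lemma (in prob_space) nn_integral_powr_finite:
  fixes X :: "'a \<Rightarrow> real" and a b :: real
  assumes [measurable]: "X \<in> borel_measurable M"
    and int: "integrable M (\<lambda>\<omega>. \<bar>X \<omega>\<bar> powr a)" and b: "0 \<le> b" "b \<le> a"
  shows "(\<integral>\<^sup>+\<omega>. ennreal (\<bar>X \<omega>\<bar> powr b) \<partial>M) < \<infinity>"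
proof -
  have "(\<integral>\<^sup>+\<omega>. ennreal (\<bar>X \<omega>\<bar> powr b) \<partial>M) \<le> (\<integral>\<^sup>+\<omega>. ennreal (1 + \<bar>X \<omega>\<bar> powr a) \<partial>M)"
  proof (intro nn_integral_mono ennreal_leI)
    fix \<omega> show "\<bar>X \<omega>\<bar> powr b \<le> 1 + \<bar>X \<omega>\<bar> powr a"
    proof (cases "\<bar>X \<omega>\<bar> \<le> 1")
      case True
      then have "\<bar>X \<omega>\<bar> powr b \<le> 1" using b by (intro powr_le1) auto
      then show ?thesis by (smt (verit) powr_ge_zero)
    next
      case False
      then have "\<bar>X \<omega>\<bar> powr b \<le> \<bar>X \<omega>\<bar> powr a" using b by (intro powr_mono) auto
      then show ?thesis by simp
    qed
  qed
  also have "\<dots> = (\<integral>\<^sup>+\<omega>. ennreal 1 \<partial>M) + (\<integral>\<^sup>+\<omega>. ennreal (\<bar>X \<omega>\<bar> powr a) \<partial>M)"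
    by (subst nn_integral_add[symmetric]) (auto intro!: nn_integral_cong simp: ennreal_plus)
  also have "\<dots> < \<infinity>"
    using integrableD(2)[OF int] by (simp add: emeasure_space_1 less_top)
  finally show ?thesis .
qed

text \<open>Identically distributed random variables with a finite moment of some positive
  order are almost surely absolutely summable against geometric weights q ^ n,
  0 < q < 1.  With b = min a 1 and r = q powr b, Tonelli
  gives E (\<Sum>n. r ^ n * \<bar>X n\<bar> powr b) < \<infinity>; then use the previous lemmas.\<close>
lemma (in prob_space) AE_summable_geometric_weights:
  fixes X :: "nat \<Rightarrow> 'a \<Rightarrow> real" and q a :: real
  assumes X[measurable]: "\<And>n. X n \<in> borel_measurable M"
    and dist: "\<And>n. distr M borel (X n) = distr M borel (X 0)"
    and a: "a > 0" and int: "integrable M (\<lambda>\<omega>. \<bar>X 0 \<omega>\<bar> powr a)"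
    and q: "0 < q" "q < 1"
  shows "AE \<omega> in M. summable (\<lambda>n. q ^ n * \<bar>X n \<omega>\<bar>)"
proof -
  define b where "b = min a 1"
  have b: "0 < b" "b \<le> 1" "b \<le> a" using a by (auto simp: b_def)
  define r where "r = q powr b"
  have r: "0 < r" "r < 1" unfolding r_def using q b powr_less_mono2[of b q 1] by auto
  define c where "c = (\<integral>\<^sup>+\<omega>. ennreal (\<bar>X 0 \<omega>\<bar> powr b) \<partial>M)"
  have c_finite: "c < \<infinity>"
    unfolding c_def by (rule nn_integral_powr_finite[OF _ int]) (use b in auto)
  have same_moment: "(\<integral>\<^sup>+\<omega>. ennreal (\<bar>X n \<omega>\<bar> powr b) \<partial>M) = c" for n
  proof -
    have "(\<integral>\<^sup>+\<omega>. ennreal (\<bar>X n \<omega>\<bar> powr b) \<partial>M) = (\<integral>\<^sup>+x. ennreal (\<bar>x\<bar> powr b) \<partial>distr M borel (X n))"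
      by (subst nn_integral_distr) auto
    also have "\<dots> = c" unfolding dist[of n] c_def by (subst nn_integral_distr) auto
    finally show ?thesis .
  qed
  have "(\<integral>\<^sup>+\<omega>. (\<Sum>n. ennreal (r ^ n * \<bar>X n \<omega>\<bar> powr b)) \<partial>M) = (\<Sum>n. ennreal (r ^ n) * c)"
    using r by (subst nn_integral_suminf) (auto simp: ennreal_mult nn_integral_cmult same_moment)
  also have "\<dots> = (\<Sum>n. ennreal (r ^ n)) * c" by (rule ennreal_suminf_multc)
  also have "\<dots> < \<infinity>"
  proof -
    have "(\<Sum>n. ennreal (r ^ n)) \<noteq> \<top>"
      using r summable_geometric[of r] by (intro ennreal_suminf_neq_top) auto
    with c_finite show ?thesis by (simp add: ennreal_mult_less_top less_top)
  qed
  finally have "AE \<omega> in M. (\<Sum>n. ennreal (r ^ n * \<bar>X n \<omega>\<bar> powr b)) \<noteq> \<infinity>"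
    by (intro nn_integral_PInf_AE) (auto simp del: ennreal_mult)
  then show ?thesis
  proof (rule AE_mp, intro AE_I2 impI)
    fix \<omega> assume "(\<Sum>n. ennreal (r ^ n * \<bar>X n \<omega>\<bar> powr b)) \<noteq> \<infinity>"
    then have "summable (\<lambda>n. r ^ n * \<bar>X n \<omega>\<bar> powr b)"
      using r by (intro summable_suminf_not_top) auto
    moreover have "(q ^ n * \<bar>X n \<omega>\<bar>) powr b = r ^ n * \<bar>X n \<omega>\<bar> powr b" for n
      unfolding r_def using q by (simp add: powr_mult powr_realpow[symmetric] powr_powr mult.commute)
    ultimately have "summable (\<lambda>n. (q ^ n * \<bar>X n \<omega>\<bar>) powr b)" by simp
    then show "summable (\<lambda>n. q ^ n * \<bar>X n \<omega>\<bar>)"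
      by (rule summable_of_summable_powr[rotated 3]) (use q b in auto)
  qed
qed

lemma (in prob_space) AE_geometric_series_converges:
  fixes Y :: "nat \<Rightarrow> 'a \<Rightarrow> real" and \<rho> a :: real
  assumes Y[measurable]: "\<And>n. n \<ge> 1 \<Longrightarrow> Y n \<in> borel_measurable M"
    and dist: "\<And>n. n \<ge> 1 \<Longrightarrow> distr M borel (Y n) = distr M borel (Y 1)"
    and a: "a > 0" and int: "integrable M (\<lambda>\<omega>. \<bar>Y 1 \<omega>\<bar> powr a)"
    and \<rho>: "\<bar>\<rho>\<bar> < 1"
  shows "AE \<omega> in M. (\<lambda>m. \<Sum>n<m. \<rho> ^ (n + 1) * Y (n + 1) \<omega>) \<longlonglongrightarrow> (\<Sum>n. \<rho> ^ (n + 1) * Y (n + 1) \<omega>)"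
proof -
  define q where "q = (1 + \<bar>\<rho>\<bar>) / 2"
  have q: "0 < q" "q < 1" "\<bar>\<rho>\<bar> \<le> q" using \<rho> by (auto simp: q_def)
  have "AE \<omega> in M. summable (\<lambda>n. q ^ n * \<bar>Y (n + 1) \<omega>\<bar>)"
  proof (rule AE_summable_geometric_weights[OF _ _ a _ q(1,2)])
    show "distr M borel (Y (n + 1)) = distr M borel (Y (0 + 1))" for n
      using dist[of "n + 1"] by simp
    show "Y (n + 1) \<in> borel_measurable M" for n
      using Y[of "n + 1"] by simp
    show "integrable M (\<lambda>\<omega>. \<bar>Y (0 + 1) \<omega>\<bar> powr a)"
      using int by simp
  qed
  then show ?thesis
  proof eventually_elim
    case (elim \<omega>)
    have bound: "norm (\<rho> ^ (n + 1) * Y (n + 1) \<omega>) \<le> q ^ n * \<bar>Y (n + 1) \<omega>\<bar>" for n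
    proof -
      have "\<bar>\<rho>\<bar> ^ (n + 1) \<le> \<bar>\<rho>\<bar> ^ n" using \<rho> by (intro power_decreasing) auto
      also have "\<dots> \<le> q ^ n" using q by (intro power_mono) auto
      finally have "\<bar>\<rho>\<bar> ^ (n + 1) * \<bar>Y (n + 1) \<omega>\<bar> \<le> q ^ n * \<bar>Y (n + 1) \<omega>\<bar>"
        by (rule mult_right_mono) simp
      then show ?thesis by (simp add: abs_mult power_abs)
    qed
    have "summable (\<lambda>n. \<rho> ^ (n + 1) * Y (n + 1) \<omega>)"
      by (rule summable_comparison_test'[OF elim bound])
    then show ?case by (rule summable_LIMSEQ)
  qed
qed

lemma norm_prod_le_power_prefix:
  fixes f :: "nat \<Rightarrow> 'b::real_normed_field" and \<delta> :: real
  assumes le1: "\<And>n. norm (f n) \<le> 1" and small: "\<And>n. n < N \<Longrightarrow> norm (f n) \<le> \<delta>"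
    and "N \<le> m"
  shows "norm (\<Prod>n<m. f n) \<le> \<delta> ^ N"
  using \<open>N \<le> m\<close>
proof (induction m rule: dec_induct)
  case base
  have "norm (\<Prod>n<N. f n) = (\<Prod>n<N. norm (f n))" by (simp add: prod_norm)
  also have "\<dots> \<le> (\<Prod>n<N. \<delta>)" using small by (intro prod_mono) auto
  finally show ?case by simp
next
  case (step m)
  have "norm (\<Prod>n<Suc m. f n) = norm (\<Prod>n<m. f n) * norm (f m)"
    by (simp add: norm_mult)
  also have "\<dots> \<le> \<delta> ^ N * 1"
    using step.IH le1 by (intro mult_mono) (auto intro: order_trans[OF norm_ge_zero])
  finally show ?case by simp
qed

lemma (in prob_space) char_partial_sum:
  fixes Y :: "nat \<Rightarrow> 'a \<Rightarrow> real" and \<rho> s :: real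
  assumes ind: "indep_vars (\<lambda>_. borel) Y {1..}"
    and dist: "\<And>n. n \<ge> 1 \<Longrightarrow> distr M borel (Y n) = distr M borel (Y 1)"
  shows "(\<integral>\<omega>. iexp (s * (\<Sum>n<m. \<rho> ^ (n + 1) * Y (n + 1) \<omega>)) \<partial>M)
          = (\<Prod>n<m. char (distr M borel (Y 1)) (s * \<rho> ^ (n + 1)))"
proof -
  have Y[measurable]: "n \<ge> 1 \<Longrightarrow> Y n \<in> borel_measurable M" for n
    using ind unfolding indep_vars_def by auto
  define X where "X n \<omega> = iexp (s * \<rho> ^ n * Y n \<omega>)" for n \<omega>
  have indep_X: "indep_vars (\<lambda>_. borel) X {1..m}"
    unfolding X_def
    by (rule indep_vars_compose2[OF indep_vars_subset[OF ind], where Y="\<lambda>n y. iexp (s * \<rho> ^ n * y)"]) auto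
  have integrable_X: "integrable M (X n)" if "n \<in> {1..m}" for n
    unfolding X_def using that by (intro integrable_iexp) auto
  have char_X: "(\<integral>\<omega>. X n \<omega> \<partial>M) = char (distr M borel (Y 1)) (s * \<rho> ^ n)" if n: "n \<in> {1..m}" for n
  proof -
    have "(\<integral>\<omega>. X n \<omega> \<partial>M) = char (distr M borel (Y n)) (s * \<rho> ^ n)"
      unfolding char_def X_def using n by (subst integral_distr) auto
    also have "\<dots> = char (distr M borel (Y 1)) (s * \<rho> ^ n)"
      using dist[of n] n by simp
    finally show ?thesis .
  qed
  have "iexp (s * (\<Sum>n<m. \<rho> ^ (n + 1) * Y (n + 1) \<omega>)) = (\<Prod>n\<in>{1..m}. X n \<omega>)" for \<omega>
  proof -
    have "iexp (s * (\<Sum>n<m. \<rho> ^ (n + 1) * Y (n + 1) \<omega>))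
        = exp (\<Sum>n<m. \<i> * complex_of_real (s * \<rho> ^ (n + 1) * Y (n + 1) \<omega>))"
      by (simp add: sum_distrib_left mult.assoc)
    also have "\<dots> = (\<Prod>n<m. X (Suc n) \<omega>)" by (simp add: exp_sum X_def)
    finally show ?thesis by (simp add: prod.atLeast1_atMost_eq)
  qed
  then have "(\<integral>\<omega>. iexp (s * (\<Sum>n<m. \<rho> ^ (n + 1) * Y (n + 1) \<omega>)) \<partial>M) = (\<Prod>n\<in>{1..m}. \<integral>\<omega>. X n \<omega> \<partial>M)"
    using indep_vars_lebesgue_integral[OF _ indep_X integrable_X] by simp
  also have "\<dots> = (\<Prod>n<m. char (distr M borel (Y 1)) (s * \<rho> ^ (n + 1)))"
    by (simp add: char_X prod.atLeast1_atMost_eq)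
  finally show ?thesis .
qed

text \<open>Step (2), geometric decay of the characteristic function of the series limit Z:
  if \<bar>\<phi>(t)\<bar> \<le> \<delta> for \<bar>t\<bar> \<ge> t0, the first N factors of the partial-sum product are
  at most \<delta> once \<bar>\<rho>\<bar>^N \<bar>s\<bar> \<ge> t0, and the bound passes to the limit by dominated
  convergence.\<close>
lemma (in prob_space) char_series_geometric_bound:
  fixes Y :: "nat \<Rightarrow> 'a \<Rightarrow> real" and Z :: "'a \<Rightarrow> real" and \<rho> s \<delta> t\<^sub>0 :: real
  assumes ind: "indep_vars (\<lambda>_. borel) Y {1..}"
    and dist: "\<And>n. n \<ge> 1 \<Longrightarrow> distr M borel (Y n) = distr M borel (Y 1)"
    and Z[measurable]: "Z \<in> borel_measurable M"
    and lim: "AE \<omega> in M. (\<lambda>m. \<Sum>n<m. \<rho> ^ (n + 1) * Y (n + 1) \<omega>) \<longlonglongrightarrow> Z \<omega>"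
    and \<rho>: "\<bar>\<rho>\<bar> \<le> 1"
    and \<phi>_small: "\<And>t. \<bar>t\<bar> \<ge> t\<^sub>0 \<Longrightarrow> cmod (char (distr M borel (Y 1)) t) \<le> \<delta>"
    and s: "\<bar>\<rho>\<bar> ^ N * \<bar>s\<bar> \<ge> t\<^sub>0"
  shows "cmod (char (distr M borel Z) s) \<le> \<delta> ^ N"
proof -
  have Y1[measurable]: "Y 1 \<in> borel_measurable M"
    using ind unfolding indep_vars_def by auto
  interpret Y1_distr: real_distribution "distr M borel (Y 1)"
    using Y1 by (rule real_distribution_distr)
  let ?\<phi> = "char (distr M borel (Y 1))"
  have char_Z: "char (distr M borel Z) s = (\<integral>\<omega>. iexp (s * Z \<omega>) \<partial>M)"
    unfolding char_def by (subst integral_distr) auto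
  have "(\<lambda>m. \<integral>\<omega>. iexp (s * (\<Sum>n<m. \<rho> ^ (n + 1) * Y (n + 1) \<omega>)) \<partial>M) \<longlonglongrightarrow> char (distr M borel Z) s"
    unfolding char_Z
  proof (rule integral_dominated_convergence[where w="\<lambda>_. 1"])
    show "AE \<omega> in M. (\<lambda>m. iexp (s * (\<Sum>n<m. \<rho> ^ (n + 1) * Y (n + 1) \<omega>))) \<longlonglongrightarrow> iexp (s * Z \<omega>)"
      using lim by eventually_elim (rule isCont_tendsto_compose[where g="\<lambda>z. iexp (s * z)"], intro continuous_intros, simp)
    show "(\<lambda>\<omega>. iexp (s * (\<Sum>n<m. \<rho> ^ (n + 1) * Y (n + 1) \<omega>))) \<in> borel_measurable M" for m
    proof -
      have "Y (n + 1) \<in> borel_measurable M" for n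
        using ind unfolding indep_vars_def by auto
      then show ?thesis by measurable
    qed
  qed (auto simp del: of_real_mult)
  then have lim_prod: "(\<lambda>m. norm (\<Prod>n<m. ?\<phi> (s * \<rho> ^ (n + 1)))) \<longlonglongrightarrow> cmod (char (distr M borel Z) s)"
    by (intro tendsto_norm) (simp only: char_partial_sum[OF ind dist])
  have prod_bound: "norm (\<Prod>n<m. ?\<phi> (s * \<rho> ^ (n + 1))) \<le> \<delta> ^ N" if "N \<le> m" for m
  proof (rule norm_prod_le_power_prefix[OF Y1_distr.cmod_char_le_1 \<phi>_small that])
    fix n assume "n < N"
    then have "\<bar>\<rho>\<bar> ^ N \<le> \<bar>\<rho>\<bar> ^ (n + 1)" using \<rho> by (intro power_decreasing) auto
    then have "\<bar>\<rho>\<bar> ^ N * \<bar>s\<bar> \<le> \<bar>\<rho>\<bar> ^ (n + 1) * \<bar>s\<bar>" by (rule mult_right_mono) simp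
    then show "t\<^sub>0 \<le> \<bar>s * \<rho> ^ (n + 1)\<bar>" using s by (simp add: abs_mult power_abs mult.commute)
  qed
  show ?thesis
    by (rule tendsto_upperbound[OF lim_prod]) (use prod_bound in \<open>auto simp: eventually_sequentially\<close>)
qed

definition power_tail :: "real \<Rightarrow> real \<Rightarrow> real \<Rightarrow> real \<Rightarrow> real" where
  "power_tail t\<^sub>0 K p s = (if \<bar>s\<bar> \<le> t\<^sub>0 then 1 else K * \<bar>s\<bar> powr (- p))"

text \<open>For p > 1 the power tail is Lebesgue integrable: it is dominated by the indicator
  of [-t0, t0] plus the two mirrored tails s^(-p) on [t0, \<infinity>).\<close>
lemma integrable_power_tail:
  fixes t\<^sub>0 K p :: real
  assumes t\<^sub>0: "t\<^sub>0 > 0" and p: "p > 1"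
  shows "integrable lborel (power_tail t\<^sub>0 K p)"
proof -
  let ?h = "\<lambda>s. indicator {t\<^sub>0..} s * s powr (- p) :: real"
  have "((\<lambda>s. s powr (- p)) has_integral - (t\<^sub>0 powr (- p + 1)) / (- p + 1)) {t\<^sub>0..}"
    by (rule has_integral_powr_to_inf) (use p t\<^sub>0 in auto)
  then have "integral\<^sup>N lborel ?h = - (t\<^sub>0 powr (- p + 1)) / (- p + 1)"
    by (intro nn_integral_has_integral_lebesgue) auto
  then have right_tail: "integrable lborel ?h"
    by (intro integrableI_nonneg) (auto simp: indicator_def)
  have left_tail: "integrable lborel (\<lambda>s. ?h (0 + (- 1) * s))"
    by (rule lborel_integrable_real_affine[OF right_tail]) simp
  have center: "integrable lborel (indicator {- t\<^sub>0..t\<^sub>0} :: real \<Rightarrow> real)"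
    by (rule integrable_real_indicator) (use t\<^sub>0 in auto)
  have "integrable lborel (\<lambda>s. indicator {- t\<^sub>0..t\<^sub>0} s + \<bar>K\<bar> * ?h s + \<bar>K\<bar> * ?h (0 + (- 1) * s))"
    using right_tail left_tail center by auto
  then show ?thesis
  proof (rule Bochner_Integration.integrable_bound)
    show "power_tail t\<^sub>0 K p \<in> borel_measurable lborel"
      unfolding power_tail_def by measurable
    show "AE s in lborel. norm (power_tail t\<^sub>0 K p s)
        \<le> norm (indicator {- t\<^sub>0..t\<^sub>0} s + \<bar>K\<bar> * ?h s + \<bar>K\<bar> * ?h (0 + (- 1) * s))"
      using t\<^sub>0 by (intro AE_I2) (auto simp: power_tail_def indicator_def abs_mult)
  qed
qed

text \<open>Step (3) at a single point s with \<bar>s\<bar> > t0: a bound c \<le> \<delta>^N valid whenever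
  q^N \<bar>s\<bar> \<ge> t0 yields c \<le> K \<bar>s\<bar>^(-p) with p = ln \<delta> / ln q, by taking the
  largest admissible N = \<lfloor>ln(\<bar>s\<bar>/t0) / ln(1/q)\<rfloor>.\<close>
lemma geometric_decay_le_powr:
  fixes q \<delta> t\<^sub>0 s c :: real
  assumes q: "0 < q" "q < 1" and \<delta>: "0 < \<delta>" "\<delta> < q" and t\<^sub>0: "t\<^sub>0 > 0" and s: "\<bar>s\<bar> > t\<^sub>0"
    and geom: "\<And>N::nat. q ^ N * \<bar>s\<bar> \<ge> t\<^sub>0 \<Longrightarrow> c \<le> \<delta> ^ N"
  shows "c \<le> (t\<^sub>0 powr (ln \<delta> / ln q) / \<delta>) * \<bar>s\<bar> powr (- (ln \<delta> / ln q))"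
proof -
  define x where "x = ln (\<bar>s\<bar> / t\<^sub>0) / (- ln q)"
  have ln_q: "ln q < 0" using q by simp
  have ln_\<delta>: "ln \<delta> < 0" using \<delta> q by simp
  have "ln (\<bar>s\<bar> / t\<^sub>0) > 0" using s t\<^sub>0 by simp
  then have x_pos: "x > 0" unfolding x_def using ln_q by (intro divide_pos_pos) auto
  define N where "N = nat \<lfloor>x\<rfloor>"
  have N: "real N \<le> x" "x < real N + 1" unfolding N_def using x_pos by linarith+
  have "x * ln q = ln (t\<^sub>0 / \<bar>s\<bar>)"
    unfolding x_def using ln_q s t\<^sub>0 by (simp add: ln_div field_simps)
  then have "t\<^sub>0 / \<bar>s\<bar> = exp (x * ln q)" using s t\<^sub>0 by simp
  also have "\<dots> \<le> exp (real N * ln q)"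
    using N ln_q by (intro exp_le_cancel_iff[THEN iffD2] mult_right_mono_neg) auto
  also have "exp (real N * ln q) = q ^ N" using q by (simp add: exp_of_nat_mult)
  finally have "q ^ N * \<bar>s\<bar> \<ge> t\<^sub>0" using s t\<^sub>0 by (simp add: field_simps)
  then have "c \<le> \<delta> ^ N" by (rule geom)
  also have "\<delta> ^ N = exp (real N * ln \<delta>)" using \<delta> by (simp add: exp_of_nat_mult)
  also have "\<dots> \<le> exp ((x - 1) * ln \<delta>)"
    using N ln_\<delta> by (intro exp_le_cancel_iff[THEN iffD2] mult_right_mono_neg) auto
  also have "\<dots> = exp (x * ln \<delta>) / \<delta>" using \<delta> by (simp add: left_diff_distrib exp_diff)
  also have "exp (x * ln \<delta>) = exp ((ln t\<^sub>0 - ln \<bar>s\<bar>) * (ln \<delta> / ln q))"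
    unfolding x_def using s t\<^sub>0 ln_q by (simp add: ln_div field_simps)
  also have "\<dots> = t\<^sub>0 powr (ln \<delta> / ln q) * \<bar>s\<bar> powr (- (ln \<delta> / ln q))"
    using s t\<^sub>0 by (simp add: powr_def exp_add[symmetric] algebra_simps)
  finally show ?thesis by (simp add: field_simps)
qed

text \<open>Hence a function bounded by 1 with such geometric decay has a power-tail
  majorant with exponent p > 1, because \<delta> < q.\<close>
lemma geometric_decay_imp_power_tail:
  fixes c :: "real \<Rightarrow> real" and q \<delta> t\<^sub>0 :: real
  assumes q: "0 < q" "q < 1" and \<delta>: "0 < \<delta>" "\<delta> < q" and t\<^sub>0: "t\<^sub>0 > 0"
    and le1: "\<And>s. c s \<le> 1"
    and geom: "\<And>s N. q ^ N * \<bar>s\<bar> \<ge> t\<^sub>0 \<Longrightarrow> c s \<le> \<delta> ^ N"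
  shows "\<exists>K p. p > 1 \<and> (\<forall>s. c s \<le> power_tail t\<^sub>0 K p s)"
proof (intro exI conjI allI)
  define p where "p = ln \<delta> / ln q"
  have "ln \<delta> < ln q" "ln q < 0" using \<delta> q by auto
  then show "p > 1" unfolding p_def by (simp add: less_divide_eq)
  fix s
  show "c s \<le> power_tail t\<^sub>0 (t\<^sub>0 powr p / \<delta>) p s"
    using le1[of s] geometric_decay_le_powr[OF q \<delta> t\<^sub>0, of s "c s"] geom[of _ s]
    by (auto simp: power_tail_def p_def)
qed

lemma gaussian_char_identity:
  fixes x :: real
  shows "complex_of_real (exp (- (x ^ 2) / 2)) = (\<integral>t. std_normal_density t *\<^sub>R iexp (x * t) \<partial>lborel)"
proof -
  have "complex_of_real (exp (- (x ^ 2) / 2)) = char std_normal_distribution x"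
    by (simp add: char_std_normal_distribution)
  also have "\<dots> = (\<integral>t. std_normal_density t *\<^sub>R iexp (x * t) \<partial>lborel)"
    unfolding char_def by (subst integral_density) auto
  finally show ?thesis .
qed

text \<open>Gaussian smoothing, step (4): by the identity above and Fubini,
  E exp(-(TX)^2/2) = \<integral> N(t) \<psi>_X(Tt) dt, which is bounded by \<integral> N(t) \<bar>\<psi>_X(Tt)\<bar> dt.\<close>
lemma (in prob_space) gaussian_smoothing:
  fixes X :: "'a \<Rightarrow> real" and T :: real
  assumes X[measurable]: "X \<in> borel_measurable M"
  shows "(\<integral>\<omega>. exp (- ((T * X \<omega>) ^ 2) / 2) \<partial>M)
    \<le> (\<integral>t. std_normal_density t * cmod (char (distr M borel X) (T * t)) \<partial>lborel)"
proof -
  interpret product: pair_sigma_finite M lborel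
    by (simp add: pair_sigma_finite.intro lborel.sigma_finite_measure_axioms sigma_finite_measure_axioms)
  define f where "f \<omega> t = std_normal_density t *\<^sub>R iexp (T * X \<omega> * t)" for \<omega> t
  have f_measurable[measurable]: "case_prod f \<in> borel_measurable (M \<Otimes>\<^sub>M lborel)"
    unfolding f_def by measurable
  have norm_f: "norm (f \<omega> t) = std_normal_density t" for \<omega> t
    unfolding f_def by (simp add: norm_exp_i_times del: of_real_mult)
  have "integrable lborel (f \<omega>)" for \<omega>
  proof (rule Bochner_Integration.integrable_bound[OF integrable_normal_density[of 1 0]])
    show "f \<omega> \<in> borel_measurable lborel" unfolding f_def by measurable
  qed (auto simp: norm_f)
  then have f_integrable: "integrable (M \<Otimes>\<^sub>M lborel) (case_prod f)"
    by (intro product.Fubini_integrable) (auto simp: norm_f)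
  have char_X: "char (distr M borel X) u = (\<integral>\<omega>. iexp (u * X \<omega>) \<partial>M)" for u
    unfolding char_def by (subst integral_distr) auto
  have "complex_of_real (\<integral>\<omega>. exp (- ((T * X \<omega>) ^ 2) / 2) \<partial>M)
      = (\<integral>\<omega>. complex_of_real (exp (- ((T * X \<omega>) ^ 2) / 2)) \<partial>M)"
    by simp
  also have "\<dots> = (\<integral>\<omega>. (\<integral>t. f \<omega> t \<partial>lborel) \<partial>M)"
    unfolding f_def by (subst gaussian_char_identity) simp
  also have "\<dots> = (\<integral>t. (\<integral>\<omega>. f \<omega> t \<partial>M) \<partial>lborel)"
    using product.Fubini_integral[OF f_integrable] by simp
  also have "\<dots> = (\<integral>t. std_normal_density t *\<^sub>R char (distr M borel X) (T * t) \<partial>lborel)"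
    unfolding f_def char_X by (simp add: mult_ac)
  finally have eq: "complex_of_real (\<integral>\<omega>. exp (- ((T * X \<omega>) ^ 2) / 2) \<partial>M) = \<dots>" .
  have "(\<integral>\<omega>. exp (- ((T * X \<omega>) ^ 2) / 2) \<partial>M)
      = norm (complex_of_real (\<integral>\<omega>. exp (- ((T * X \<omega>) ^ 2) / 2) \<partial>M))"
    by (simp add: integral_nonneg_AE)
  also have "\<dots> \<le> (\<integral>t. norm (std_normal_density t *\<^sub>R char (distr M borel X) (T * t)) \<partial>lborel)"
    unfolding eq by (rule integral_norm_bound)
  finally show ?thesis by simp
qed

lemma std_normal_density_le_1: "std_normal_density t \<le> 1"
proof -
  have "1 / sqrt (2 * pi) \<le> 1" using pi_gt3 by simp
  moreover have "exp (- t\<^sup>2 / 2) \<le> 1" by simp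
  ultimately have "(1 / sqrt (2 * pi)) * exp (- t\<^sup>2 / 2) \<le> 1 * 1"
    by (intro mult_mono) auto
  then show ?thesis unfolding std_normal_density_def by simp
qed

text \<open>Markov-type comparison: on {\<bar>X\<bar> \<le> 1/T} one has exp(-(TX)^2/2) \<ge> e^(-1/2).\<close>
lemma (in prob_space) small_ball_le_gaussian_moment:
  fixes X :: "'a \<Rightarrow> real" and T :: real
  assumes X[measurable]: "X \<in> borel_measurable M" and T: "T > 0"
  shows "prob {\<omega> \<in> space M. \<bar>X \<omega>\<bar> \<le> 1 / T} \<le> exp (1 / 2) * (\<integral>\<omega>. exp (- ((T * X \<omega>) ^ 2) / 2) \<partial>M)"
proof -
  let ?A = "{\<omega> \<in> space M. \<bar>X \<omega>\<bar> \<le> 1 / T}"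
  have A: "?A \<in> events" by measurable
  have "prob ?A = (\<integral>\<omega>. indicator ?A \<omega> \<partial>M)" using A by simp
  also have "\<dots> \<le> (\<integral>\<omega>. exp (1 / 2) * exp (- ((T * X \<omega>) ^ 2) / 2) \<partial>M)"
  proof (rule integral_mono)
    show "integrable M (\<lambda>\<omega>. indicator ?A \<omega> :: real)"
      using A by (intro integrable_real_indicator) (auto simp: emeasure_eq_measure)
    show "integrable M (\<lambda>\<omega>. exp (1 / 2) * exp (- ((T * X \<omega>) ^ 2) / 2))"
      by (intro integrable_mult_right integrable_const_bound[where B=1]) auto
    fix \<omega> assume "\<omega> \<in> space M"
    show "indicator ?A \<omega> \<le> exp (1 / 2) * exp (- ((T * X \<omega>) ^ 2) / 2)"
    proof (cases "\<omega> \<in> ?A")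
      case True
      then have "\<bar>T * X \<omega>\<bar> \<le> 1" using T by (auto simp: abs_mult field_simps)
      then have "\<bar>T * X \<omega>\<bar> ^ 2 \<le> 1" by (intro power_le_one) auto
      then have "(T * X \<omega>) ^ 2 \<le> 1" by simp
      then have "1 \<le> exp (1 / 2) * exp (- ((T * X \<omega>) ^ 2) / 2)"
        by (simp add: exp_add[symmetric])
      then show ?thesis using True by simp
    qed simp
  qed
  finally show ?thesis by simp
qed

text \<open>Small-ball bound from an integrable majorant B of the characteristic function:
  P(\<bar>X\<bar> \<le> \<epsilon>) \<le> e^(1/2) \<epsilon> \<integral>B, using N \<le> 1 and the substitution s = t/\<epsilon>.\<close>
lemma (in prob_space) small_ball_le_integral_char_bound:
  fixes X :: "'a \<Rightarrow> real" and B :: "real \<Rightarrow> real" and \<epsilon> :: real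
  assumes X[measurable]: "X \<in> borel_measurable M"
    and B_integrable: "integrable lborel B"
    and char_le_B: "\<And>s. cmod (char (distr M borel X) s) \<le> B s"
    and \<epsilon>: "\<epsilon> > 0"
  shows "prob {\<omega> \<in> space M. \<bar>X \<omega>\<bar> \<le> \<epsilon>} \<le> exp (1 / 2) * (\<integral>s. B s \<partial>lborel) * \<epsilon>"
proof -
  define T where "T = 1 / \<epsilon>"
  have T: "T > 0" "1 / T = \<epsilon>" using \<epsilon> by (auto simp: T_def)
  interpret X_distr: real_distribution "distr M borel X" using X by (rule real_distribution_distr)
  let ?\<phi> = "char (distr M borel X)"
  have "(\<integral>t. std_normal_density t * cmod (?\<phi> (T * t)) \<partial>lborel) \<le> (\<integral>t. B (0 + T * t) \<partial>lborel)"
  proof (rule integral_mono)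
    show "integrable lborel (\<lambda>t. B (0 + T * t))"
      by (rule lborel_integrable_real_affine[OF B_integrable]) (use T in auto)
    show "integrable lborel (\<lambda>t. std_normal_density t * cmod (?\<phi> (T * t)))"
    proof (rule Bochner_Integration.integrable_bound[OF integrable_normal_density[of 1 0]])
      show "(\<lambda>t. std_normal_density t * cmod (?\<phi> (T * t))) \<in> borel_measurable lborel"
        using X_distr.char_measurable by measurable
      show "AE t in lborel. norm (std_normal_density t * cmod (?\<phi> (T * t))) \<le> norm (std_normal_density t)"
        using X_distr.cmod_char_le_1 by (auto intro!: mult_left_le simp: abs_mult)
    qed simp
    show "std_normal_density t * cmod (?\<phi> (T * t)) \<le> B (0 + T * t)" for t
      using mult_mono[OF std_normal_density_le_1 char_le_B[of "T * t"]] by simp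
  qed
  also have "\<dots> = \<epsilon> * (\<integral>s. B s \<partial>lborel)"
    using lborel_integral_real_affine[of T B 0] T by (simp add: T_def)
  finally have smoothed: "(\<integral>t. std_normal_density t * cmod (?\<phi> (T * t)) \<partial>lborel) \<le> \<epsilon> * (\<integral>s. B s \<partial>lborel)" .
  have "prob {\<omega> \<in> space M. \<bar>X \<omega>\<bar> \<le> \<epsilon>} \<le> exp (1 / 2) * (\<integral>\<omega>. exp (- ((T * X \<omega>) ^ 2) / 2) \<partial>M)"
    using small_ball_le_gaussian_moment[OF X T(1)] unfolding T(2) .
  also have "\<dots> \<le> exp (1 / 2) * (\<integral>t. std_normal_density t * cmod (?\<phi> (T * t)) \<partial>lborel)"
    by (intro mult_left_mono gaussian_smoothing[OF X]) simp
  also have "\<dots> \<le> exp (1 / 2) * (\<epsilon> * (\<integral>s. B s \<partial>lborel))"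
    by (intro mult_left_mono smoothed) simp
  finally show ?thesis by (simp add: mult_ac)
qed

text \<open>A linear bound f(\<epsilon>) \<le> C \<epsilon> for all \<epsilon> > 0 is the statement f(\<epsilon>) = O(\<epsilon>)
  as \<epsilon> \<down> 0, expressed as finiteness of the upper limit of f(\<epsilon>)/\<epsilon>.\<close>
lemma Limsup_ratio_at_right_finite:
  fixes f :: "real \<Rightarrow> real" and C :: real
  assumes "\<And>\<epsilon>. \<epsilon> > 0 \<Longrightarrow> f \<epsilon> \<le> C * \<epsilon>"
  shows "Limsup (at_right 0) (\<lambda>\<epsilon>. ereal (f \<epsilon> / \<epsilon>)) < \<infinity>"
proof -
  have "\<forall>\<^sub>F \<epsilon> in at_right 0. ereal (f \<epsilon> / \<epsilon>) \<le> ereal C"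
    using eventually_at_right_less[of "0::real"]
    by eventually_elim (use assms in \<open>simp add: divide_le_eq\<close>)
  then have "Limsup (at_right 0) (\<lambda>\<epsilon>. ereal (f \<epsilon> / \<epsilon>)) \<le> ereal C"
    by (rule Limsup_bounded)
  then show ?thesis by (rule le_less_trans) simp
qed

theorem mainTheorem7:
  fixes M :: "'a measure" and Y :: "nat \<Rightarrow> 'a \<Rightarrow> real"
    and \<rho> a \<delta> t\<^sub>0 :: real and Z :: "'a \<Rightarrow> real"
  assumes "prob_space M"
    and "-1 < \<rho>" and "\<rho> < 1" and "\<rho> \<noteq> 0"
    and "prob_space.indep_vars M (\<lambda>_. borel) Y {1..}"
    and "\<And>n. n \<ge> 1 \<Longrightarrow> distr M borel (Y n) = distr M borel (Y 1)"
    and "a > 0" and "integrable M (\<lambda>\<omega>. \<bar>Y 1 \<omega>\<bar> powr a)"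
    and "\<And>\<omega>. Z \<omega> = (\<Sum>n. \<rho> ^ (n + 1) * Y (n + 1) \<omega>)"
    and "0 < \<delta>" and "\<delta> < \<bar>\<rho>\<bar>" and "t\<^sub>0 > 0"
    and "\<And>t. \<bar>t\<bar> \<ge> t\<^sub>0 \<Longrightarrow> cmod (char (distr M borel (Y 1)) t) \<le> \<delta>"
  shows "Limsup (at_right 0)
           (\<lambda>\<epsilon>. ereal (measure M {\<omega> \<in> space M. \<bar>Z \<omega>\<bar> \<le> \<epsilon>} / \<epsilon>)) < \<infinity>"
proof -
  interpret prob_space M by fact
  let ?\<psi> = "char (distr M borel Z)"
  have \<rho>: "0 < \<bar>\<rho>\<bar>" "\<bar>\<rho>\<bar> < 1" using assms(2-4) by auto
  have Y[measurable]: "n \<ge> 1 \<Longrightarrow> Y n \<in> borel_measurable M" for n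
    using assms(5) unfolding indep_vars_def by auto
  have Z_eq: "Z = (\<lambda>\<omega>. \<Sum>n. \<rho> ^ (n + 1) * Y (n + 1) \<omega>)" using assms(9) by auto
  have Z[measurable]: "Z \<in> borel_measurable M"
    unfolding Z_eq using Y[of "Suc n" for n] by measurable
  have lim: "AE \<omega> in M. (\<lambda>m. \<Sum>n<m. \<rho> ^ (n + 1) * Y (n + 1) \<omega>) \<longlonglongrightarrow> Z \<omega>"
    unfolding Z_eq
    by (rule AE_geometric_series_converges[where Y=Y and a=a and \<rho>=\<rho>, OF Y assms(6-8) \<rho>(2)])
  have geometric: "cmod (?\<psi> s) \<le> \<delta> ^ N" if "\<bar>\<rho>\<bar> ^ N * \<bar>s\<bar> \<ge> t\<^sub>0" for s N
    using char_series_geometric_bound[OF assms(5,6) Z lim _ assms(13) that] \<rho> by simp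
  have le1: "cmod (?\<psi> s) \<le> 1" for s
    using real_distribution.cmod_char_le_1[OF real_distribution_distr[OF Z]] .
  obtain K p where p: "p > 1" and decay: "\<And>s. cmod (?\<psi> s) \<le> power_tail t\<^sub>0 K p s"
    using geometric_decay_imp_power_tail[where c="\<lambda>s. cmod (?\<psi> s)", OF \<rho> assms(10-12) le1 geometric]
    by blast
  have "measure M {\<omega> \<in> space M. \<bar>Z \<omega>\<bar> \<le> \<epsilon>}
      \<le> exp (1 / 2) * (\<integral>s. power_tail t\<^sub>0 K p s \<partial>lborel) * \<epsilon>" if "\<epsilon> > 0" for \<epsilon>
    by (rule small_ball_le_integral_char_bound[OF Z integrable_power_tail[OF assms(12) p] decay that])
  then show ?thesis by (rule Limsup_ratio_at_right_finite)
qed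

end
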